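(* Let $\mathbb{T}_S$ be a spherically symmetric tree with origin $\mathcal{O}$, and consider the cone percolation process on $\mathbb{T}_S$ with radius of influence $R$ satisfying $\mathbb{P}(R\le k)=1$ for some $k\in\mathbb{N}$. If $$\dim\inf\partial\mathbb{T}_S > \ln\Big[\frac{1}{1-\prod_{j=1}^k\mathbb{P}(R<j)}\Big],$$ then $\mathbb{P}(V)>0$.
   Context: Cone percolation process: Let $\mathbb{T}$ be a tree with origin $\mathcal{O}$ and graph distance $d(\cdot,\cdot)$. Write $u\le v$ if $u$ lies on the path from $\mathcal{O}$ to $v$. Let $R$ be a random variable with values in $\{0,1,2,\dots\}$, $p_k=\mathbb{P}(R=k)$, and assume $p_0\in(0,1)$. Let $\{R_v\}$ be i.i.d. copies of $R$ indexed by the vertices. For each vertex $u$ let $B_u=\{v: u\le v,\ d(u,v)\le R_u\}$. Set $I_0=\{\mathcal{O}\}$, $I_{n+1}=\bigcup_{u\in I_n}B_u$, $I=\bigcup_n I_n$; survival is the event $V=\{|I|=\infty\}$. A tree is spherically symmetric if any two vertices at the same distance from $\mathcal{O}$ have the same degree. For a vertex $u$ and $n\ge1$, $M_n(u)=|\{v: u\le v,\ d(v,\mathcal{O})=d(u,\mathcal{O})+n\}|$, and $\dim\inf\partial\mathbb{T}:=\lim_{n\to\infty}\min_{v}\frac1n\ln M_n(v)$ (assumed to exist). *)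

theory Defs
  imports "HOL-Probability.Probability" "HOL-Library.Sublist"
begin

text \<open>Trees are represented in Ulam--Harris form: vertices are finite lists of
naturals, the origin is the empty list, the parent of xs@[i] is xs.
The order u \<le> v (u on the path from the origin to v) is prefix u v, and for
u \<le> v the graph distance is length v - length u.\<close>

definition rooted_tree :: "nat list set \<Rightarrow> bool" where
  "rooted_tree T \<longleftrightarrow> [] \<in> T \<and> (\<forall>v\<in>T. \<forall>u. prefix u v \<longrightarrow> u \<in> T)
     \<and> (\<forall>u\<in>T. finite {v\<in>T. \<exists>i. v = u @ [i]})"

definition tree_degree :: "nat list set \<Rightarrow> nat list \<Rightarrow> nat" where
  "tree_degree T u = card {v\<in>T. \<exists>i. v = u @ [i]} + (if u = [] then 0 else 1)"

definition spherically_symmetric :: "nat list set \<Rightarrow> bool" where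
  "spherically_symmetric T \<longleftrightarrow>
     (\<forall>u\<in>T. \<forall>v\<in>T. length u = length v \<longrightarrow> tree_degree T u = tree_degree T v)"

definition Mdesc :: "nat list set \<Rightarrow> nat \<Rightarrow> nat list \<Rightarrow> nat" where
  "Mdesc T n u = card {v\<in>T. prefix u v \<and> length v = length u + n}"

definition lnE :: "nat \<Rightarrow> ereal" where
  "lnE m = (if m = 0 then - \<infinity> else ereal (ln (real m)))"

text \<open>The sequence min_v (1/n) ln M_n(v), whose limit is dim inf of the boundary.\<close>
definition dim_inf_seq :: "nat list set \<Rightarrow> nat \<Rightarrow> ereal" where
  "dim_inf_seq T n = (INF v\<in>T. lnE (Mdesc T n v) / ereal (real n))"

text \<open>Cone percolation cluster I for a given realisation r of the radii:
  I is the union of the I_n, I_0 = {origin}, I_{n+1} = union of B_u over u in I_n,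
  B_u = {v. u \<le> v, d(u,v) \<le> r u}.\<close>
inductive_set cone_cluster :: "nat list set \<Rightarrow> (nat list \<Rightarrow> nat) \<Rightarrow> nat list set"
  for T r where
  origin: "[] \<in> cone_cluster T r"
| spread: "u \<in> cone_cluster T r \<Longrightarrow> v \<in> T \<Longrightarrow> prefix u v \<Longrightarrow>
           length v - length u \<le> r u \<Longrightarrow> v \<in> cone_cluster T r"

end

theory Submission
  imports Defs
begin

text \<open>
  Along a path the cone cluster is described by a covering condition: depth i is reached when
  some ancestor at depth j < i has radius at least i - j. Cut paths into blocks of length L and
  ask each block to be covered by its own radii. These events are independent and have a common
  probability \<rho>_L \<ge> (1 - p_0)^k (1 - q)^L with q = \<Prod>j<k. P(R \<le> j), because coverage fails
  at the next position only when no radius seen so far reaches beyond it.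
  If the paths to two vertices of depth nL split inside block m, the n blocks of the first and
  the blocks of the second after block m are disjoint, so both vertices are fully covered with
  probability at most \<rho>_L^(2n - 1 - m). Spherical symmetry makes the number of such pairs
  computable, and the second moment method shows that with probability at least \<rho>_L/2 some
  vertex of depth nL has all its blocks covered, provided |level (mL)| \<rho>_L^m \<ge> 2^m for all m.
  The dimension hypothesis gives |level n| \<ge> e^(an) with a > ln (1/(1 - q)), which makes this
  true for large L. These events decrease in n, and their intersection forces an infinite cluster.
\<close>

section \<open>Covering sequences of radii\<close>

text \<open>reach x n is the maximum of x j - (n - 1 - j) over j < n (see reach_ge_iff): how far past
  position n - 1 the radii seen so far still reach.\<close>
fun reach :: "(nat \<Rightarrow> nat) \<Rightarrow> nat \<Rightarrow> nat" where
  "reach x 0 = 0"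
| "reach x (Suc n) = max (reach x n - 1) (x n)"

definition covered :: "nat \<Rightarrow> (nat \<Rightarrow> nat) \<Rightarrow> bool" where
  "covered n x \<longleftrightarrow> (\<forall>i\<in>{1..n}. \<exists>j<i. i - j \<le> x j)"

lemma reach_ge_iff: "1 \<le> c \<Longrightarrow> c \<le> reach x i \<longleftrightarrow> (\<exists>j<i. c + (i - 1 - j) \<le> x j)"
proof (induction i arbitrary: c)
  case 0
  then show ?case by simp
next
  case (Suc n)
  have "c \<le> reach x (Suc n) \<longleftrightarrow> c + 1 \<le> reach x n \<or> c \<le> x n"
    using Suc.prems by auto
  also have "\<dots> \<longleftrightarrow> (\<exists>j<n. c + 1 + (n - 1 - j) \<le> x j) \<or> c \<le> x n"
    using Suc.IH[of "c + 1"] by simp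
  also have "\<dots> \<longleftrightarrow> (\<exists>j<Suc n. c + (Suc n - 1 - j) \<le> x j)"
    by (auto simp: less_Suc_eq)
  finally show ?case .
qed

lemma covered_iff_reach: "covered n x \<longleftrightarrow> (\<forall>i\<in>{1..n}. 1 \<le> reach x i)"
  unfolding covered_def by (intro ball_cong refl) (auto simp: reach_ge_iff)

lemma covered_0 [simp]: "covered 0 x"
  by (simp add: covered_def)

lemma covered_Suc: "covered (Suc n) x \<longleftrightarrow> covered n x \<and> 1 \<le> reach x (Suc n)"
  unfolding covered_iff_reach by (auto simp: atLeastAtMostSuc_conv)

lemma reach_cong: "(\<And>j. j < n \<Longrightarrow> x j = y j) \<Longrightarrow> reach x n = reach y n"
  by (induction n) auto

lemma covered_cong: "(\<And>j. j < n \<Longrightarrow> x j = y j) \<Longrightarrow> covered n x = covered n y"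
  unfolding covered_def by (intro ball_cong refl ex_cong1) auto

lemma covered_mono: "covered n x \<Longrightarrow> m \<le> n \<Longrightarrow> covered m x"
  by (auto simp: covered_def)

lemma covered_blocks:
  assumes L: "0 < L" and blocks: "\<And>b. b < n \<Longrightarrow> covered L (\<lambda>j. x (b * L + j))"
  shows "covered (n * L) x"
  unfolding covered_def
proof
  fix i assume i: "i \<in> {1..n * L}"
  define b where "b = (i - 1) div L"
  have "b * L \<le> i - 1" "i - 1 < b * L + L"
    using L unfolding b_def
    by (simp_all add: div_times_less_eq_dividend) (metis add.commute div_mult_mod_eq mod_less_divisor nat_add_left_cancel_less)
  then have bL: "b * L < i" "i \<le> b * L + L"
    using i by auto
  have "b < n"
    using L i unfolding b_def by (auto simp: div_less_iff_less_mult)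
  moreover have "i - b * L \<in> {1..L}"
    using bL by auto
  ultimately obtain j where "j < i - b * L" "i - b * L - j \<le> x (b * L + j)"
    using blocks[of b] unfolding covered_def by blast
  then show "\<exists>j<i. i - j \<le> x j"
    by (intro exI[of _ "b * L + j"]) auto
qed

section \<open>Independence and the second moment\<close>

lemma measurable_PiM_count_space_finite:
  assumes "finite K"
  shows "g \<in> measurable (PiM K (\<lambda>_. count_space (UNIV :: 'b :: countable set))) (count_space UNIV)"
  by (simp add: count_space_PiM_finite[OF assms])

context prob_space begin

lemma indep_vars_prob_INT_local:
  fixes X :: "'i \<Rightarrow> 'a \<Rightarrow> nat" and K :: "'j \<Rightarrow> 'i set"
    and g :: "'j \<Rightarrow> ('i \<Rightarrow> nat) \<Rightarrow> bool"
  assumes ind: "indep_vars (\<lambda>_. count_space UNIV) X I"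
    and B: "finite B" "B \<noteq> {}"
    and K: "\<And>b. b \<in> B \<Longrightarrow> finite (K b) \<and> K b \<subseteq> I"
    and dis: "disjoint_family_on K B"
    and loc: "\<And>b f f'. b \<in> B \<Longrightarrow> (\<And>i. i \<in> K b \<Longrightarrow> f i = f' i) \<Longrightarrow> g b f = g b f'"
  shows "prob (\<Inter>b\<in>B. {\<omega>\<in>space M. g b (\<lambda>i. X i \<omega>)})
    = (\<Prod>b\<in>B. prob {\<omega>\<in>space M. g b (\<lambda>i. X i \<omega>)})"
proof -
  have i1: "indep_vars (\<lambda>b. PiM (K b) (\<lambda>_. count_space UNIV)) (\<lambda>b \<omega>. restrict (\<lambda>i. X i \<omega>) (K b)) B"
    by (rule indep_vars_restrict[OF ind]) (use K dis in auto)
  have i2: "indep_vars (\<lambda>_. count_space UNIV) (\<lambda>b \<omega>. g b (restrict (\<lambda>i. X i \<omega>) (K b))) B"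
    by (rule indep_vars_compose2[OF i1]) (use K in \<open>auto intro!: measurable_PiM_count_space_finite\<close>)
  have eqg: "g b (restrict (\<lambda>i. X i \<omega>) (K b)) = g b (\<lambda>i. X i \<omega>)" if "b \<in> B" for b \<omega>
    by (rule loc[OF that]) auto
  have "prob (\<Inter>b\<in>B. (\<lambda>\<omega>. g b (restrict (\<lambda>i. X i \<omega>) (K b))) -` {True} \<inter> space M)
     = (\<Prod>b\<in>B. prob ((\<lambda>\<omega>. g b (restrict (\<lambda>i. X i \<omega>) (K b))) -` {True} \<inter> space M))"
    by (rule indep_varsD[OF i2]) (use B in auto)
  moreover have "(\<Inter>b\<in>B. (\<lambda>\<omega>. g b (restrict (\<lambda>i. X i \<omega>) (K b))) -` {True} \<inter> space M)
       = (\<Inter>b\<in>B. {\<omega>\<in>space M. g b (\<lambda>i. X i \<omega>)})"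
    using eqg by auto
  moreover have "\<And>b. b \<in> B \<Longrightarrow> (\<lambda>\<omega>. g b (restrict (\<lambda>i. X i \<omega>) (K b))) -` {True} \<inter> space M
       = {\<omega>\<in>space M. g b (\<lambda>i. X i \<omega>)}"
    using eqg by auto
  ultimately show ?thesis by (metis (no_types, lifting) prod.cong)
qed

lemma local_event_sets:
  fixes X :: "'i \<Rightarrow> 'a \<Rightarrow> nat" and g :: "('i \<Rightarrow> nat) \<Rightarrow> bool"
  assumes ind: "indep_vars (\<lambda>_. count_space UNIV) X I"
    and K: "finite K" "K \<subseteq> I"
    and loc: "\<And>f f'. (\<And>i. i \<in> K \<Longrightarrow> f i = f' i) \<Longrightarrow> g f = g f'"
  shows "{\<omega>\<in>space M. g (\<lambda>i. X i \<omega>)} \<in> events"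
proof -
  have m: "(\<lambda>\<omega>. restrict (\<lambda>i. X i \<omega>) K) \<in> measurable M (PiM K (\<lambda>_. count_space UNIV))"
    using ind K by (auto simp: indep_vars_def intro!: measurable_restrict)
  have "(\<lambda>\<omega>. g (restrict (\<lambda>i. X i \<omega>) K)) \<in> measurable M (count_space UNIV)"
    by (rule measurable_compose[OF m measurable_PiM_count_space_finite[OF K(1)]])
  then have "{\<omega>\<in>space M. g (restrict (\<lambda>i. X i \<omega>) K)} \<in> events"
    by (simp add: pred_def[symmetric])
  moreover have "\<And>\<omega>. g (restrict (\<lambda>i. X i \<omega>) K) = g (\<lambda>i. X i \<omega>)"
    by (rule loc) auto
  ultimately show ?thesis by simp
qed

lemma indep_vars_reindex:
  fixes X :: "'i \<Rightarrow> 'a \<Rightarrow> nat"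
  assumes ind: "indep_vars (\<lambda>_. count_space UNIV) X I"
    and u: "inj_on u J" "u ` J \<subseteq> I"
  shows "indep_vars (\<lambda>_. count_space UNIV) (\<lambda>j. X (u j)) J"
proof -
  have i1: "indep_vars (\<lambda>j. PiM {u j} (\<lambda>_. count_space UNIV)) (\<lambda>j \<omega>. restrict (\<lambda>i. X i \<omega>) {u j}) J"
    by (rule indep_vars_restrict[OF ind]) (use u in \<open>auto simp: disjoint_family_on_def inj_on_def\<close>)
  have i2: "indep_vars (\<lambda>_. count_space UNIV) (\<lambda>j \<omega>. (restrict (\<lambda>i. X i \<omega>) {u j}) (u j)) J"
    by (rule indep_vars_compose2[OF i1]) (auto intro: measurable_component_singleton)
  then show ?thesis by simp
qed

text \<open>Cauchy--Schwarz for the sum of the indicators and the indicator of their union.\<close>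
lemma prob_UN_second_moment:
  fixes A :: "'i \<Rightarrow> 'a set"
  assumes V: "finite V" and A: "\<And>v. v \<in> V \<Longrightarrow> A v \<in> events"
  shows "(\<Sum>v\<in>V. prob (A v))\<^sup>2 \<le> prob (\<Union>v\<in>V. A v) * (\<Sum>v\<in>V. \<Sum>w\<in>V. prob (A v \<inter> A w))"
proof -
  define U where "U = (\<Union>v\<in>V. A v)"
  have U: "U \<in> events" unfolding U_def using V A by auto
  define f where "f x = (\<Sum>v\<in>V. indicator (A v) x :: ennreal)" for x
  define g where "g x = (indicator U x :: ennreal)" for x
  have fm: "f \<in> borel_measurable M" unfolding f_def using A by (auto intro!: borel_measurable_sum)
  have gm: "g \<in> borel_measurable M" unfolding g_def using U by simp
  have CS: "(\<integral>\<^sup>+x. f x * g x \<partial>M)\<^sup>2 \<le> (\<integral>\<^sup>+x. f x ^ 2 \<partial>M) * (\<integral>\<^sup>+x. g x ^ 2 \<partial>M)"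
    by (rule Cauchy_Schwarz_nn_integral[OF fm gm])
  have fg: "f x * g x = f x" for x
  proof (cases "x \<in> U")
    case True then show ?thesis by (simp add: g_def)
  next
    case False then have "x \<notin> A v" if "v \<in> V" for v using that by (auto simp: U_def)
    then show ?thesis by (simp add: f_def g_def)
  qed
  have f2: "f x ^ 2 = (\<Sum>v\<in>V. \<Sum>w\<in>V. indicator (A v \<inter> A w) x)" for x
    unfolding f_def power2_eq_square sum_product indicator_inter_arith ..
  have g2: "g x ^ 2 = indicator U x" for x by (simp add: g_def power2_eq_square indicator_inter_arith[symmetric])
  have I1: "(\<integral>\<^sup>+x. f x \<partial>M) = ennreal (\<Sum>v\<in>V. prob (A v))"
    unfolding f_def using A V by (subst nn_integral_sum) (auto simp: emeasure_eq_measure)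
  have I2: "(\<integral>\<^sup>+x. f x ^ 2 \<partial>M) = ennreal (\<Sum>v\<in>V. \<Sum>w\<in>V. prob (A v \<inter> A w))"
    unfolding f2 using A V
    by (simp add: nn_integral_sum emeasure_eq_measure sum_nonneg Int)
  have I3: "(\<integral>\<^sup>+x. g x ^ 2 \<partial>M) = ennreal (prob U)"
    unfolding g2 using U by (simp add: emeasure_eq_measure)
  have "ennreal ((\<Sum>v\<in>V. prob (A v))\<^sup>2) \<le> ennreal ((\<Sum>v\<in>V. \<Sum>w\<in>V. prob (A v \<inter> A w)) * prob U)"
    using CS unfolding fg I1 I2 I3
    by (simp add: ennreal_power ennreal_mult sum_nonneg)
  then have "(\<Sum>v\<in>V. prob (A v))\<^sup>2 \<le> (\<Sum>v\<in>V. \<Sum>w\<in>V. prob (A v \<inter> A w)) * prob U"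
    by (subst (asm) ennreal_le_iff) (auto intro!: mult_nonneg_nonneg sum_nonneg)
  then show ?thesis by (simp add: U_def mult.commute)
qed

end

section \<open>Probability that i.i.d. radii cover a block\<close>

definition cdf :: "nat pmf \<Rightarrow> nat \<Rightarrow> real" where
  "cdf p t = measure_pmf.prob p {..t}"

lemma cdf_nonneg: "0 \<le> cdf p t" and cdf_le_1: "cdf p t \<le> 1"
  by (simp_all add: cdf_def)

lemma cdf_0: "cdf p 0 = pmf p 0"
  by (simp add: cdf_def measure_pmf_single[symmetric])

lemma cdf_mono: "s \<le> t \<Longrightarrow> cdf p s \<le> cdf p t"
  unfolding cdf_def by (rule measure_pmf.finite_measure_mono) auto

lemma cdf_eq_1: "measure_pmf.prob p {..k} = 1 \<Longrightarrow> k \<le> t \<Longrightarrow> cdf p t = 1"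
  using cdf_mono[of k t p] cdf_le_1[of p t] unfolding cdf_def by linarith

locale iid_radii = prob_space +
  fixes X :: "nat \<Rightarrow> 'a \<Rightarrow> nat" and L :: nat and p :: "nat pmf"
  assumes indep: "indep_vars (\<lambda>_. count_space UNIV) X {..<L}"
    and distr_X: "\<And>i. i < L \<Longrightarrow> distr M (count_space UNIV) (X i) = measure_pmf p"
begin

definition covered_event :: "nat \<Rightarrow> 'a set" where
  "covered_event n = {\<omega>\<in>space M. covered n (\<lambda>i. X i \<omega>)}"

definition reach_event :: "nat \<Rightarrow> nat \<Rightarrow> 'a set" where
  "reach_event n t = {\<omega>\<in>space M. covered n (\<lambda>i. X i \<omega>) \<and> reach (\<lambda>i. X i \<omega>) n \<le> t}"

lemma prob_X_le: "i < L \<Longrightarrow> prob {\<omega>\<in>space M. X i \<omega> \<le> t} = cdf p t"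
proof -
  assume i: "i < L"
  have X: "X i \<in> measurable M (count_space UNIV)"
    using indep i by (auto simp: indep_vars_def)
  have "cdf p t = measure (distr M (count_space UNIV) (X i)) {..t}"
    using distr_X[OF i] by (simp add: cdf_def)
  also have "\<dots> = measure M (X i -` {..t} \<inter> space M)"
    by (rule measure_distr[OF X]) auto
  finally show ?thesis
    by (simp add: vimage_def Int_def conj_commute)
qed

lemma events_prefix:
  assumes "n \<le> L" and "\<And>f f'. (\<And>j. j < n \<Longrightarrow> f j = f' j) \<Longrightarrow> g f = g f'"
  shows "{\<omega>\<in>space M. g (\<lambda>i. X i \<omega>)} \<in> events"
proof (rule local_event_sets[OF indep, of "{..<n}"])
  show "{..<n} \<subseteq> {..<L}"
    using assms(1) by auto
  fix f f' :: "nat \<Rightarrow> nat"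
  assume "\<And>i. i \<in> {..<n} \<Longrightarrow> f i = f' i"
  then show "g f = g f'"
    by (intro assms(2)) simp
qed simp

lemma covered_event_sets: "n \<le> L \<Longrightarrow> covered_event n \<in> events"
  unfolding covered_event_def by (rule events_prefix, assumption, rule covered_cong)

lemma reach_event_sets: "n \<le> L \<Longrightarrow> reach_event n t \<in> events"
  unfolding reach_event_def
proof (rule events_prefix)
  fix f f' :: "nat \<Rightarrow> nat"
  assume "\<And>j. j < n \<Longrightarrow> f j = f' j"
  then show "(covered n f \<and> reach f n \<le> t) = (covered n f' \<and> reach f' n \<le> t)"
    using covered_cong[of n f f'] reach_cong[of n f f'] by simp
qed

text \<open>X n is independent of the radii before position n.\<close>
lemma prob_reach_event_X_le:
  assumes n: "n < L"
  shows "prob (reach_event n (t + 1) \<inter> {\<omega>\<in>space M. X n \<omega> \<le> t}) = prob (reach_event n (t + 1)) * cdf p t"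
proof -
  define g where "g c f = (if c then covered n f \<and> reach f n \<le> t + 1 else f n \<le> t)" for c f
  define K where "K c = (if c then {..<n} else {n})" for c
  have "prob (\<Inter>c\<in>UNIV. {\<omega>\<in>space M. g c (\<lambda>i. X i \<omega>)})
      = (\<Prod>c\<in>UNIV. prob {\<omega>\<in>space M. g c (\<lambda>i. X i \<omega>)})"
  proof (rule indep_vars_prob_INT_local[OF indep])
    show "disjoint_family_on K UNIV"
      by (auto simp: disjoint_family_on_def K_def)
    fix c and f f' :: "nat \<Rightarrow> nat"
    assume "\<And>i. i \<in> K c \<Longrightarrow> f i = f' i"
    then show "g c f = g c f'"
      unfolding g_def K_def using covered_cong[of n f f'] reach_cong[of n f f'] by (cases c) auto
  qed (use n in \<open>auto simp: K_def\<close>)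
  then show ?thesis
    using prob_X_le[OF n, of t] by (simp add: UNIV_bool g_def reach_event_def Int_def conj_ac mult.commute)
qed

lemma X_le_sets: "i < L \<Longrightarrow> {\<omega>\<in>space M. X i \<omega> \<le> t} \<in> events"
  using indep measurable_sets[of "X i" M "count_space UNIV" "{..t}"]
  by (auto simp: indep_vars_def vimage_def Int_def conj_commute)

lemma prob_covered_event_Suc:
  assumes n: "n < L"
  shows "prob (covered_event (Suc n)) = prob (covered_event n) - prob (reach_event n 1) * cdf p 0"
proof -
  define A where "A = reach_event n 1 \<inter> {\<omega>\<in>space M. X n \<omega> \<le> 0}"
  have "covered_event (Suc n) = covered_event n - A"
    by (auto simp: A_def covered_event_def reach_event_def covered_Suc)
  moreover have "A \<subseteq> covered_event n"
    by (auto simp: A_def covered_event_def reach_event_def)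
  moreover have "A \<in> events"
    unfolding A_def using n by (intro sets.Int reach_event_sets X_le_sets) auto
  ultimately show ?thesis
    using n finite_measure_Diff[OF covered_event_sets] prob_reach_event_X_le[OF n, of 0]
    by (simp only: A_def) simp
qed

lemma prob_reach_event_Suc:
  assumes n: "n < L"
  shows "prob (reach_event (Suc n) t) = prob (reach_event n (t + 1)) * cdf p t - prob (reach_event n 1) * cdf p 0"
proof -
  define A where "A s = reach_event n (s + 1) \<inter> {\<omega>\<in>space M. X n \<omega> \<le> s}" for s
  have "reach_event (Suc n) t = A t - A 0"
    by (auto simp: A_def reach_event_def covered_Suc)
  moreover have "A 0 \<subseteq> A t"
    by (auto simp: A_def reach_event_def)
  moreover have "A s \<in> events" for s
    unfolding A_def using n by (intro sets.Int reach_event_sets X_le_sets) auto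
  ultimately have "prob (reach_event (Suc n) t) = prob (A t) - prob (A 0)"
    using finite_measure_Diff by simp
  then show ?thesis
    unfolding A_def prob_reach_event_X_le[OF n] by simp
qed

text \<open>Given coverage so far, the reach stays \<le> t only if no radius reaches beyond t; this is the
  invariant of the induction.\<close>
lemma prob_reach_event_le:
  "n \<le> L \<Longrightarrow> prob (reach_event n t) \<le> (\<Prod>j<n. cdf p (t + j)) * prob (covered_event n)"
proof (induction n arbitrary: t)
  case 0
  then show ?case
    by (simp add: reach_event_def covered_event_def)
next
  case (Suc n)
  then have n: "n < L" by simp
  have "prob (reach_event (Suc n) t) \<le> prob (reach_event n (t + 1)) * cdf p t - prob (reach_event n 1) * cdf p 0"
    by (simp add: prob_reach_event_Suc[OF n])
  also have "\<dots> \<le> (\<Prod>j<n. cdf p (t + 1 + j)) * prob (covered_event n) * cdf p t - prob (reach_event n 1) * cdf p 0"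
    using Suc.IH[of "t + 1"] n by (intro diff_right_mono mult_right_mono) (auto simp: cdf_nonneg)
  also have "\<dots> = (\<Prod>j<Suc n. cdf p (t + j)) * prob (covered_event n) - prob (reach_event n 1) * cdf p 0"
    unfolding prod.lessThan_Suc_shift by (simp add: ac_simps)
  also have "\<dots> \<le> (\<Prod>j<Suc n. cdf p (t + j)) * (prob (covered_event n) - prob (reach_event n 1) * cdf p 0)"
    using prod_le_1[of "{..<Suc n}" "\<lambda>j. cdf p (t + j)"] prod_nonneg[of "{..<Suc n}" "\<lambda>j. cdf p (t + j)"]
      mult_nonneg_nonneg[of "prob (reach_event n 1)" "cdf p 0"]
    by (simp add: cdf_nonneg cdf_le_1 right_diff_distrib mult_left_le_one_le)
  also have "\<dots> = (\<Prod>j<Suc n. cdf p (t + j)) * prob (covered_event (Suc n))"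
    by (simp add: prob_covered_event_Suc[OF n])
  finally show ?case .
qed

text \<open>Coverage breaks at position n + 1 exactly when the reach is at most 1 and X n = 0.\<close>
lemma prob_covered_event_Suc_ge:
  assumes n: "n < L"
  shows "(1 - (\<Prod>j\<le>n. cdf p j)) * prob (covered_event n) \<le> prob (covered_event (Suc n))"
proof -
  have "(\<Prod>j\<le>n. cdf p j) = cdf p 0 * (\<Prod>j<n. cdf p (1 + j))"
    unfolding lessThan_Suc_atMost[symmetric] prod.lessThan_Suc_shift by simp
  moreover have "prob (reach_event n 1) * cdf p 0 \<le> (\<Prod>j<n. cdf p (1 + j)) * prob (covered_event n) * cdf p 0"
    using prob_reach_event_le[of n 1] n by (intro mult_right_mono) (auto simp: cdf_nonneg)
  ultimately show ?thesis
    by (simp add: prob_covered_event_Suc[OF n] algebra_simps)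
qed

lemma prob_covered_event_ge:
  "n \<le> L \<Longrightarrow> (\<Prod>i<n. 1 - (\<Prod>j\<le>i. cdf p j)) \<le> prob (covered_event n)"
proof (induction n)
  case 0
  then show ?case
    by (simp add: covered_event_def prob_space)
next
  case (Suc n)
  have nonneg: "0 \<le> 1 - (\<Prod>j\<le>n. cdf p j)"
    by (simp add: prod_le_1 cdf_nonneg cdf_le_1)
  have "(\<Prod>i<Suc n. 1 - (\<Prod>j\<le>i. cdf p j)) = (1 - (\<Prod>j\<le>n. cdf p j)) * (\<Prod>i<n. 1 - (\<Prod>j\<le>i. cdf p j))"
    by (simp add: mult.commute)
  also have "\<dots> \<le> (1 - (\<Prod>j\<le>n. cdf p j)) * prob (covered_event n)"
    using Suc nonneg by (intro mult_left_mono) auto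
  also have "\<dots> \<le> prob (covered_event (Suc n))"
    using Suc.prems by (intro prob_covered_event_Suc_ge) simp
  finally show ?case .
qed

end

lemma prod_cdf_ge:
  assumes bounded: "measure_pmf.prob p {..k} = 1"
  shows "(1 - pmf p 0) ^ k * (1 - (\<Prod>j<k. cdf p j)) ^ n \<le> (\<Prod>i<n. 1 - (\<Prod>j\<le>i. cdf p j))"
proof -
  define q where "q = (\<Prod>j<k. cdf p j)"
  have q: "0 \<le> q" "q \<le> 1"
    unfolding q_def by (auto intro: prod_nonneg prod_le_1 simp: cdf_nonneg cdf_le_1)
  have p0: "0 \<le> 1 - pmf p 0" "1 - pmf p 0 \<le> 1"
    by (simp_all add: pmf_le_1)
  have factor: "(1 - q) * (if i < k then 1 - pmf p 0 else 1) \<le> 1 - (\<Prod>j\<le>i. cdf p j)" for i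
  proof (cases "i < k")
    case True
    have "(\<Prod>j\<le>i. cdf p j) = cdf p 0 * (\<Prod>j<i. cdf p (Suc j))"
      unfolding lessThan_Suc_atMost[symmetric] prod.lessThan_Suc_shift ..
    also have "\<dots> \<le> pmf p 0"
      by (simp add: cdf_0 mult_left_le prod_le_1 cdf_nonneg cdf_le_1)
    moreover have "(1 - q) * (1 - pmf p 0) \<le> 1 - pmf p 0"
      using q p0 by (intro mult_left_le_one_le) auto
    ultimately show ?thesis
      using True by simp
  next
    case False
    have "{..i} = {..<k} \<union> {k..i}"
      using False by auto
    then have "(\<Prod>j\<le>i. cdf p j) = q * (\<Prod>j\<in>{k..i}. cdf p j)"
      unfolding q_def by (simp add: prod.union_disjoint ivl_disj_int)
    also have "\<dots> = q"
      using cdf_eq_1[OF bounded] by simp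
    finally show ?thesis
      using False by simp
  qed
  have "card ({..<n} \<inter> {i. i < k}) \<le> k"
    using card_mono[of "{..<k}" "{..<n} \<inter> {i. i < k}"] by auto
  then have "(1 - pmf p 0) ^ k \<le> (1 - pmf p 0) ^ card ({..<n} \<inter> {i. i < k})"
    using p0 by (intro power_decreasing) auto
  then have "(1 - pmf p 0) ^ k * (1 - q) ^ n \<le> (1 - q) ^ n * (1 - pmf p 0) ^ card ({..<n} \<inter> {i. i < k})"
    using q by (simp add: mult.commute mult_left_mono)
  also have "\<dots> = (\<Prod>i<n. (1 - q) * (if i < k then 1 - pmf p 0 else 1))"
    by (simp add: prod.distrib prod.If_cases)
  also have "\<dots> \<le> (\<Prod>i<n. 1 - (\<Prod>j\<le>i. cdf p j))"
    using q p0 factor by (intro prod_mono) auto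
  finally show ?thesis
    unfolding q_def .
qed

section \<open>Spherically symmetric trees\<close>

definition level :: "nat list set \<Rightarrow> nat \<Rightarrow> nat list set" where
  "level T n = {v\<in>T. length v = n}"

definition children :: "nat list set \<Rightarrow> nat list \<Rightarrow> nat list set" where
  "children T u = {v\<in>T. \<exists>i. v = u @ [i]}"

lemma prefix_iff_take: "prefix a v \<longleftrightarrow> take (length a) v = a"
proof
  assume "prefix a v" then show "take (length a) v = a" by (auto simp: prefix_def)
next
  assume "take (length a) v = a"
  then show "prefix a v" by (metis append_take_drop_id prefixI)
qed

lemma rooted_tree_take: "rooted_tree T \<Longrightarrow> v \<in> T \<Longrightarrow> take i v \<in> T"
  unfolding rooted_tree_def using take_is_prefix by blast

lemma rooted_tree_prefix: "rooted_tree T \<Longrightarrow> v \<in> T \<Longrightarrow> prefix u v \<Longrightarrow> u \<in> T"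
  unfolding rooted_tree_def by blast

lemma finite_children: "rooted_tree T \<Longrightarrow> u \<in> T \<Longrightarrow> finite (children T u)"
  unfolding rooted_tree_def children_def by blast

lemma level_0: "rooted_tree T \<Longrightarrow> level T 0 = {[]}"
  by (auto simp: level_def rooted_tree_def)

lemma finite_level:
  assumes tr: "rooted_tree T" shows "finite (level T n)"
proof (induction n)
  case 0
  have "level T 0 \<subseteq> {[]}" by (auto simp: level_def)
  then show ?case by (rule finite_subset) simp
next
  case (Suc n)
  have "level T (Suc n) \<subseteq> (\<Union>u\<in>level T n. children T u)"
  proof
    fix v assume v: "v \<in> level T (Suc n)"
    then have "v = butlast v @ [last v]" by (cases v rule: rev_cases) (auto simp: level_def)
    moreover have "butlast v \<in> T" using v rooted_tree_prefix[OF tr, of v "butlast v"] prefixeq_butlast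
      by (auto simp: level_def)
    ultimately show "v \<in> (\<Union>u\<in>level T n. children T u)" using v
      by (auto simp: level_def children_def intro!: bexI[of _ "butlast v"])
  qed
  moreover have "finite (\<Union>u\<in>level T n. children T u)"
    using Suc.IH finite_children[OF tr] by (auto simp: level_def)
  ultimately show ?case by (rule finite_subset)
qed

lemma Mdesc_Nil: "Mdesc T n [] = card (level T n)"
  by (simp add: Mdesc_def level_def)

lemma descendants_subset_level: "{v\<in>T. prefix a v \<and> length v = length a + n} \<subseteq> level T (length a + n)"
  by (auto simp: level_def)

lemma Mdesc_Suc:
  assumes tr: "rooted_tree T" and a: "a \<in> T"
  shows "Mdesc T (Suc n) a = (\<Sum>c\<in>children T a. Mdesc T n c)"
proof -
  define S where "S c = {v\<in>T. prefix c v \<and> length v = length c + n}" for c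
  have eq: "{v\<in>T. prefix a v \<and> length v = length a + Suc n} = (\<Union>c\<in>children T a. S c)"
  proof (intro equalityI subsetI)
    fix v assume v: "v \<in> {v\<in>T. prefix a v \<and> length v = length a + Suc n}"
    define c where "c = take (Suc (length a)) v"
    have tk: "take (length a) v = a" using v prefix_iff_take by blast
    have "c = a @ [v ! length a]" unfolding c_def using v tk
      by (simp add: take_Suc_conv_app_nth)
    moreover have "c \<in> T" unfolding c_def using rooted_tree_take[OF tr] v by blast
    ultimately have "c \<in> children T a" by (auto simp: children_def)
    moreover have "v \<in> S c" using v by (auto simp: S_def c_def take_is_prefix)
    ultimately show "v \<in> (\<Union>c\<in>children T a. S c)" by blast
  next
    fix v assume "v \<in> (\<Union>c\<in>children T a. S c)"
    then obtain i where "a @ [i] \<in> T" "v \<in> S (a @ [i])" by (auto simp: children_def)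
    then show "v \<in> {v\<in>T. prefix a v \<and> length v = length a + Suc n}"
      by (auto simp: S_def dest: append_prefixD)
  qed
  have fin: "finite (S c)" for c unfolding S_def
    by (rule finite_subset[OF descendants_subset_level finite_level[OF tr]])
  have dis: "S c \<inter> S c' = {}" if "c \<in> children T a" "c' \<in> children T a" "c \<noteq> c'" for c c'
    using that by (auto simp: S_def children_def prefix_iff_take)
  have "Mdesc T (Suc n) a = card (\<Union>c\<in>children T a. S c)" unfolding Mdesc_def eq ..
  also have "\<dots> = (\<Sum>c\<in>children T a. card (S c))"
    by (rule card_UN_disjoint[OF finite_children[OF tr a]]) (use fin dis in auto)
  also have "\<dots> = (\<Sum>c\<in>children T a. Mdesc T n c)" by (simp add: S_def Mdesc_def)
  finally show ?thesis .
qed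

lemma card_children_eq:
  assumes sym: "spherically_symmetric T" and "a \<in> T" "a' \<in> T" "length a = length a'"
  shows "card (children T a) = card (children T a')"
proof -
  have "tree_degree T a = tree_degree T a'" using sym assms unfolding spherically_symmetric_def by blast
  moreover have "(a = []) = (a' = [])" using assms by auto
  ultimately show ?thesis unfolding tree_degree_def children_def by (auto split: if_splits)
qed

lemma Mdesc_eq_same_depth:
  assumes tr: "rooted_tree T" and sym: "spherically_symmetric T"
  shows "a \<in> T \<Longrightarrow> a' \<in> T \<Longrightarrow> length a = length a' \<Longrightarrow> Mdesc T n a = Mdesc T n a'"
proof (induction n arbitrary: a a')
  case 0
  have "{v\<in>T. prefix a v \<and> length v = length a + 0} = {a}" using 0
    by (auto simp: prefix_iff_take)
  moreover have "{v\<in>T. prefix a' v \<and> length v = length a' + 0} = {a'}" using 0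
    by (auto simp: prefix_iff_take)
  ultimately show ?case by (simp add: Mdesc_def)
next
  case (Suc n)
  have cc: "card (children T a) = card (children T a')" by (rule card_children_eq[OF sym Suc.prems])
  show ?case
  proof (cases "children T a = {}")
    case True
    then have "children T a' = {}" using cc finite_children[OF tr Suc.prems(2)] by simp
    then show ?thesis using True Mdesc_Suc[OF tr Suc.prems(1)] Mdesc_Suc[OF tr Suc.prems(2)] by simp
  next
    case False
    then obtain c0 where c0: "c0 \<in> children T a" by blast
    have c0T: "c0 \<in> T" "length c0 = Suc (length a)" using c0 by (auto simp: children_def)
    have e1: "Mdesc T n c = Mdesc T n c0" if "c \<in> children T a" for c
      using that c0T by (intro Suc.IH) (auto simp: children_def)
    have e2: "Mdesc T n c = Mdesc T n c0" if "c \<in> children T a'" for c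
      using that c0T Suc.prems by (intro Suc.IH) (auto simp: children_def)
    have "Mdesc T (Suc n) a = card (children T a) * Mdesc T n c0"
      using Mdesc_Suc[OF tr Suc.prems(1)] e1 by simp
    moreover have "Mdesc T (Suc n) a' = card (children T a') * Mdesc T n c0"
      using Mdesc_Suc[OF tr Suc.prems(2)] e2 by simp
    ultimately show ?thesis using cc by simp
  qed
qed

definition level_pairs :: "nat list set \<Rightarrow> nat \<Rightarrow> nat \<Rightarrow> (nat list \<times> nat list) set" where
  "level_pairs T n m = {(v, w). v \<in> level T n \<and> w \<in> level T n \<and> take m v = take m w}"

text \<open>All vertices of depth m have the same number d of descendants at depth n, so both sides are
  (|level T m| d)^2.\<close>
lemma card_level_pairs:
  assumes tr: "rooted_tree T" and sym: "spherically_symmetric T" and mn: "m \<le> n"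
  shows "card (level T m) * card (level_pairs T n m) = card (level T n) ^ 2"
proof (cases "level T m = {}")
  case True
  have "level T n = {}"
  proof (rule ccontr)
    assume "level T n \<noteq> {}"
    then obtain v where "v \<in> T" "length v = n" by (auto simp: level_def)
    then have "take m v \<in> level T m" using mn rooted_tree_take[OF tr] by (auto simp: level_def)
    then show False using True by simp
  qed
  then show ?thesis using True by simp
next
  case False
  then obtain a0 where a0: "a0 \<in> level T m" by blast
  define d where "d = Mdesc T (n - m) a0"
  define S where "S a = {v\<in>level T n. take m v = a}" for a
  have Sd: "card (S a) = d" if "a \<in> level T m" for a
  proof -
    have "S a = {v\<in>T. prefix a v \<and> length v = length a + (n - m)}"
      using that mn by (auto simp: S_def level_def prefix_iff_take)
    then have "card (S a) = Mdesc T (n - m) a" by (simp add: Mdesc_def)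
    also have "\<dots> = d" unfolding d_def using that a0
      by (intro Mdesc_eq_same_depth[OF tr sym]) (auto simp: level_def)
    finally show ?thesis .
  qed
  have finS: "finite (S a)" for a unfolding S_def using finite_level[OF tr] by simp
  have U: "level T n = (\<Union>a\<in>level T m. S a)"
    using mn rooted_tree_take[OF tr] by (auto simp: S_def level_def)
  have disS: "S a \<inter> S a' = {}" if "a \<noteq> a'" for a a' using that by (auto simp: S_def)
  have c1: "card (level T n) = card (level T m) * d"
    unfolding U by (subst card_UN_disjoint) (use finite_level[OF tr] finS disS Sd in auto)
  have U2: "level_pairs T n m = (\<Union>a\<in>level T m. S a \<times> S a)"
    using mn rooted_tree_take[OF tr] by (auto simp: S_def level_def level_pairs_def)
  have c2: "card (\<Union>a\<in>level T m. S a \<times> S a) = card (level T m) * d * d"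
    by (subst card_UN_disjoint) (use finite_level[OF tr] finS Sd in \<open>auto simp: card_cartesian_product S_def\<close>)
  show ?thesis
    using c1 c2 U2 by (simp add: power2_eq_square)
qed

section \<open>The cone cluster along a path\<close>

definition path_covered :: "(nat list \<Rightarrow> nat) \<Rightarrow> nat list \<Rightarrow> bool" where
  "path_covered r v \<longleftrightarrow> covered (length v) (\<lambda>j. r (take j v))"

lemma path_covered_take: "path_covered r v \<Longrightarrow> path_covered r (take m v)"
proof -
  assume "path_covered r v"
  then have "covered (min (length v) m) (\<lambda>j. r (take j v))"
    unfolding path_covered_def by (rule covered_mono) simp
  moreover have "covered (min (length v) m) (\<lambda>j. r (take j (take m v)))
      = covered (min (length v) m) (\<lambda>j. r (take j v))"
    by (rule covered_cong) simp
  ultimately show ?thesis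
    unfolding path_covered_def by simp
qed

lemma path_covered_spread:
  assumes u: "path_covered r u" and uv: "prefix u v" and r: "length v - length u \<le> r u"
  shows "path_covered r v"
  unfolding path_covered_def covered_def
proof
  fix i assume i: "i \<in> {1..length v}"
  have u_eq: "take (length u) v = u"
    using uv by (simp add: prefix_iff_take)
  show "\<exists>j<i. i - j \<le> r (take j v)"
  proof (cases "i \<le> length u")
    case True
    then have "i \<in> {1..length u}"
      using i by auto
    then obtain j where "j < i" "i - j \<le> r (take j u)"
      using u unfolding path_covered_def covered_def by blast
    moreover have "take j u = take j v"
      using u_eq \<open>j < i\<close> True by (metis min.absorb1 less_imp_le_nat order.trans take_take)
    ultimately show ?thesis
      by auto
  next
    case False
    then show ?thesis
      using r i u_eq by (intro exI[of _ "length u"]) auto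
  qed
qed

lemma cone_cluster_iff:
  assumes tree: "rooted_tree T"
  shows "v \<in> cone_cluster T r \<longleftrightarrow> v \<in> T \<and> path_covered r v"
proof
  assume "v \<in> cone_cluster T r"
  then show "v \<in> T \<and> path_covered r v"
  proof (induction rule: cone_cluster.induct)
    case origin
    then show ?case
      using tree by (simp add: rooted_tree_def path_covered_def)
  next
    case (spread u v)
    then show ?case
      by (blast intro: path_covered_spread)
  qed
next
  show "v \<in> T \<and> path_covered r v \<Longrightarrow> v \<in> cone_cluster T r"
  proof (induction "length v" arbitrary: v rule: less_induct)
    case less
    show ?case
    proof (cases "v = []")
      case True
      then show ?thesis
        by (simp add: cone_cluster.origin)
    next
      case False
      then have "length v \<in> {1..length v}"
        by (simp add: Suc_le_eq)
      then obtain j where j: "j < length v" "length v - j \<le> r (take j v)"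
        using less.prems unfolding path_covered_def covered_def by blast
      have "take j v \<in> cone_cluster T r"
      proof (rule less.hyps)
        show "length (take j v) < length v"
          using j(1) by simp
        show "take j v \<in> T \<and> path_covered r (take j v)"
          using less.prems rooted_tree_take[OF tree] path_covered_take by blast
      qed
      moreover have "length v - length (take j v) \<le> r (take j v)"
        using j by simp
      ultimately show ?thesis
        using less.prems take_is_prefix by (blast intro: cone_cluster.spread)
    qed
  qed
qed

lemma infinite_cone_cluster_iff:
  assumes tree: "rooted_tree T"
  shows "infinite (cone_cluster T r) \<longleftrightarrow> (\<forall>n. \<exists>v\<in>level T n. path_covered r v)"
proof
  assume inf: "infinite (cone_cluster T r)"
  show "\<forall>n. \<exists>v\<in>level T n. path_covered r v"
  proof
    fix n
    have "finite (\<Union>m\<le>n. level T m)"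
      using finite_level[OF tree] by auto
    then have "\<not> cone_cluster T r \<subseteq> (\<Union>m\<le>n. level T m)"
      using inf finite_subset by blast
    then obtain v where v: "v \<in> cone_cluster T r" "n < length v"
      using cone_cluster_iff[OF tree] by (force simp: level_def)
    then have "take n v \<in> level T n" "path_covered r (take n v)"
      using cone_cluster_iff[OF tree] rooted_tree_take[OF tree] path_covered_take by (auto simp: level_def)
    then show "\<exists>v\<in>level T n. path_covered r v" ..
  qed
next
  assume h: "\<forall>n. \<exists>v\<in>level T n. path_covered r v"
  have "n \<in> length ` cone_cluster T r" for n
  proof -
    obtain v where "v \<in> level T n" "path_covered r v"
      using h by blast
    then show ?thesis
      using cone_cluster_iff[OF tree] by (auto simp: level_def)
  qed
  then have "range (\<lambda>n. n) \<subseteq> length ` cone_cluster T r"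
    by auto
  then show "infinite (cone_cluster T r)"
    using finite_imageI finite_subset infinite_UNIV_nat by fastforce
qed

section \<open>Block renormalisation\<close>

lemma second_moment_term_le:
  fixes \<rho> c N P :: real
  assumes \<rho>: "0 < \<rho>" and mn: "m \<le> n" "0 < n" and growth: "2 ^ m \<le> c * \<rho> ^ m"
    and P: "c * P = N\<^sup>2" "0 \<le> P"
  shows "\<rho> ^ (2 * n - 1 - m) * P \<le> (N * \<rho> ^ n)\<^sup>2 / \<rho> * (1 / 2) ^ m"
proof -
  have "0 < c * \<rho> ^ m"
    using growth zero_less_power[of "2 :: real" m] by linarith
  then have c: "0 < c"
    using \<rho> by (simp add: zero_less_mult_iff)
  have "2 * n - 1 - m + m + 1 = n + n"
    using mn by simp
  then have "\<rho> ^ n * \<rho> ^ n = \<rho> ^ (2 * n - 1 - m) * \<rho> ^ m * \<rho>"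
    by (metis power_add power_one_right)
  moreover have "(N * \<rho> ^ n)\<^sup>2 / \<rho> = N\<^sup>2 * (\<rho> ^ n * \<rho> ^ n) / \<rho>"
    by (simp add: power2_eq_square mult_ac)
  ultimately have "(N * \<rho> ^ n)\<^sup>2 / \<rho> = c * P * (\<rho> ^ (2 * n - 1 - m) * \<rho> ^ m)"
    using \<rho> by (simp add: P(1))
  moreover have "\<rho> ^ (2 * n - 1 - m) * P * 2 ^ m \<le> \<rho> ^ (2 * n - 1 - m) * P * (c * \<rho> ^ m)"
    using growth \<rho> P(2) by (intro mult_left_mono) auto
  ultimately show ?thesis
    by (simp add: field_simps)
qed

lemma sum_half_powers_le: "(\<Sum>m\<le>n. (1/2::real) ^ m) \<le> 2"
proof -
  have "(\<Sum>m\<le>n. (1/2::real) ^ m) = (\<Sum>m<Suc n. (1/2::real) ^ m)" by (simp add: lessThan_Suc_atMost)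
  also have "\<dots> = (1 - (1/2)^Suc n) / (1 - 1/2)" by (subst sum_gp_strict) simp
  also have "\<dots> \<le> 2" by simp
  finally show ?thesis .
qed

definition block_covered :: "nat \<Rightarrow> nat list \<Rightarrow> nat \<Rightarrow> (nat list \<Rightarrow> nat) \<Rightarrow> bool" where
  "block_covered L v b r \<longleftrightarrow> covered L (\<lambda>j. r (take (b * L + j) v))"

definition block :: "nat \<Rightarrow> nat list \<Rightarrow> nat \<Rightarrow> nat list set" where
  "block L v b = (\<lambda>j. take (b * L + j) v) ` {..<L}"

lemma block_covered_cong:
  "(\<And>i. i \<in> block L v b \<Longrightarrow> f i = f' i) \<Longrightarrow> block_covered L v b f = block_covered L v b f'"
  unfolding block_covered_def block_def by (rule covered_cong) auto

lemma block_end_le: "b < n \<Longrightarrow> L + b * L \<le> n * (L::nat)"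
  by (metis Suc_leI mult_Suc mult_le_mono1)

lemma block_memberD:
  assumes "(b + 1) * L \<le> length v" "x \<in> block L v b"
  shows "length x div L = b \<and> b * L \<le> length x \<and> take (length x) v = x"
proof -
  obtain j where j: "j < L" "x = take (b * L + j) v" using assms(2) by (auto simp: block_def)
  then have lx: "length x = b * L + j" using assms(1) by (simp add: min_def)
  then have "length x div L = b" using j(1) by simp
  then show ?thesis using lx j by simp
qed

lemma block_disjointD:
  assumes "(b + 1) * L \<le> length v" "(b' + 1) * L \<le> length w" "x \<in> block L v b" "x \<in> block L w b'"
  shows "b = b' \<and> b * L \<le> length x \<and> take (length x) v = take (length x) w"
  using block_memberD[OF assms(1,3)] block_memberD[OF assms(2,4)] by simp

lemma disjoint_blocks:
  assumes "(b + 1) * L \<le> length v" "(b' + 1) * L \<le> length v" "b \<noteq> b'"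
  shows "block L v b \<inter> block L v b' = {}"
  using block_disjointD[OF assms(1,2)] assms(3) by blast

lemma disjoint_blocks_diverging:
  assumes v: "(b + 1) * L \<le> length v" and w: "(b' + 1) * L \<le> length w" and "m < b'"
    and diverge: "take ((m + 1) * L) v \<noteq> take ((m + 1) * L) w"
  shows "block L v b \<inter> block L w b' = {}"
proof (rule ccontr)
  assume "block L v b \<inter> block L w b' \<noteq> {}"
  then obtain x where "x \<in> block L v b" "x \<in> block L w b'"
    by blast
  then have x: "b = b'" "b * L \<le> length x" "take (length x) v = take (length x) w"
    using block_disjointD[OF v w] by blast+
  have "(m + 1) * L \<le> length x"
    using x \<open>m < b'\<close> by (metis Suc_eq_plus1 Suc_leI mult_le_mono1 order.trans)
  then have "take ((m + 1) * L) v = take ((m + 1) * L) w"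
    using x(3) by (metis min.absorb1 take_take)
  with diverge show False ..
qed

lemma path_covered_blocks:
  assumes "0 < L" "length v = n * L" "\<And>b. b < n \<Longrightarrow> block_covered L v b r"
  shows "path_covered r v"
  unfolding path_covered_def using assms covered_blocks[of L n "\<lambda>j. r (take j v)"]
  by (simp add: block_covered_def)

locale cone_percolation = prob_space M for M :: "'a measure" +
  fixes T :: "nat list set" and p :: "nat pmf" and R :: "nat list \<Rightarrow> 'a \<Rightarrow> nat"
  assumes tree: "rooted_tree T"
    and indep: "indep_vars (\<lambda>_. count_space UNIV) R T"
    and distr_R: "\<forall>v\<in>T. distr M (count_space UNIV) (R v) = measure_pmf p"
begin

lemma R_measurable: "v \<in> T \<Longrightarrow> R v \<in> measurable M (count_space UNIV)"
  using indep by (auto simp: indep_vars_def)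

definition covered_seqs :: "nat \<Rightarrow> (nat \<Rightarrow> nat) set" where
  "covered_seqs L = {x\<in>space (PiM {..<L} (\<lambda>_. count_space UNIV)). covered L x}"

text \<open>\<rho>_L, the probability that L i.i.d. radii cover their own block; it is the same along
  every path (prob_covered_along).\<close>
definition block_prob :: "nat \<Rightarrow> real" where
  "block_prob L = measure (PiM {..<L} (\<lambda>_. measure_pmf p)) (covered_seqs L)"

lemma block_prob_le_1: "block_prob L \<le> 1"
proof -
  interpret PiM: prob_space "PiM {..<L} (\<lambda>_. measure_pmf p)"
    by (intro prob_space_PiM prob_space_measure_pmf)
  show ?thesis
    unfolding block_prob_def by (rule PiM.prob_le_1)
qed

lemma covered_seqs_sets: "covered_seqs L \<in> sets (PiM {..<L} (\<lambda>_. count_space UNIV))"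
proof -
  have "covered L \<in> measurable (PiM {..<L} (\<lambda>_. count_space UNIV)) (count_space UNIV)"
    by (rule measurable_PiM_count_space_finite) simp
  then show ?thesis unfolding covered_seqs_def by (simp add: pred_def[symmetric])
qed

lemma prob_covered_along:
  assumes L: "0 < L" and u: "inj_on u {..<L}" "u ` {..<L} \<subseteq> T"
  shows "prob {\<omega>\<in>space M. covered L (\<lambda>j. R (u j) \<omega>)} = block_prob L"
proof -
  define Y where "Y i = (if i < L then R (u i) else (\<lambda>_. 0))" for i
  have Ym: "random_variable (count_space UNIV) (Y i)" for i
    using R_measurable u by (auto simp: Y_def)
  have i1: "indep_vars (\<lambda>_. count_space UNIV) (\<lambda>j. R (u j)) {..<L}"
    by (rule indep_vars_reindex[OF indep u])
  have i2: "indep_vars (\<lambda>_. count_space UNIV) Y {..<L}"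
    using i1 by (subst indep_vars_cong[where Y="\<lambda>j. R (u j)" and N'="\<lambda>_. count_space UNIV"]) (auto simp: Y_def)
  have de: "distr M (PiM {..<L} (\<lambda>_. count_space UNIV)) (\<lambda>x. \<lambda>i\<in>{..<L}. Y i x)
      = PiM {..<L} (\<lambda>i. distr M (count_space UNIV) (Y i))"
    using i2 indep_vars_iff_distr_eq_PiM[where I="{..<L}" and M'="\<lambda>_. count_space UNIV" and X=Y] L Ym by auto
  also have "\<dots> = PiM {..<L} (\<lambda>_. measure_pmf p)"
    by (rule PiM_cong) (use distr_R u in \<open>auto simp: Y_def\<close>)
  finally have de2: "distr M (PiM {..<L} (\<lambda>_. count_space UNIV)) (\<lambda>x. \<lambda>i\<in>{..<L}. Y i x)
      = PiM {..<L} (\<lambda>_. measure_pmf p)" .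
  have fm: "(\<lambda>x. \<lambda>i\<in>{..<L}. Y i x) \<in> measurable M (PiM {..<L} (\<lambda>_. count_space UNIV))"
    using Ym by (intro measurable_restrict) auto
  have "block_prob L = measure (distr M (PiM {..<L} (\<lambda>_. count_space UNIV)) (\<lambda>x. \<lambda>i\<in>{..<L}. Y i x)) (covered_seqs L)"
    unfolding block_prob_def de2 ..
  also have "\<dots> = measure M ((\<lambda>x. \<lambda>i\<in>{..<L}. Y i x) -` covered_seqs L \<inter> space M)"
    by (rule measure_distr[OF fm covered_seqs_sets])
  also have "(\<lambda>x. \<lambda>i\<in>{..<L}. Y i x) -` covered_seqs L \<inter> space M
      = {\<omega>\<in>space M. covered L (\<lambda>j. R (u j) \<omega>)}"
  proof -
    have "covered L (\<lambda>i\<in>{..<L}. Y i \<omega>) = covered L (\<lambda>j. R (u j) \<omega>)" for \<omega>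
      by (rule covered_cong) (simp add: Y_def)
    moreover have "(\<lambda>i\<in>{..<L}. Y i \<omega>) \<in> space (PiM {..<L} (\<lambda>_. count_space UNIV))" for \<omega>
      by (simp add: space_PiM)
    ultimately show ?thesis by (auto simp: covered_seqs_def)
  qed
  finally show ?thesis by simp
qed

definition block_event :: "nat \<Rightarrow> nat list \<Rightarrow> nat \<Rightarrow> 'a set" where
  "block_event L v b = {\<omega>\<in>space M. block_covered L v b (\<lambda>u. R u \<omega>)}"

lemma block_subset: "v \<in> T \<Longrightarrow> block L v b \<subseteq> T"
  unfolding block_def using rooted_tree_take[OF tree] by auto

lemma block_event_sets: "v \<in> T \<Longrightarrow> block_event L v b \<in> events"
  unfolding block_event_def
proof (rule local_event_sets[OF indep, of "block L v b"])
  show "finite (block L v b)" by (simp add: block_def)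
  show "block L v b \<subseteq> T" if "v \<in> T" using block_subset[OF that] .
  fix f f' :: "nat list \<Rightarrow> nat" assume "\<And>i. i \<in> block L v b \<Longrightarrow> f i = f' i"
  then show "block_covered L v b f = block_covered L v b f'" by (rule block_covered_cong)
qed

lemma prob_block_event:
  assumes L: "0 < L" and v: "v \<in> T" and bl: "(b + 1) * L \<le> length v"
  shows "prob (block_event L v b) = block_prob L"
proof -
  have "prob {\<omega>\<in>space M. covered L (\<lambda>j. R (take (b * L + j) v) \<omega>)} = block_prob L"
  proof (rule prob_covered_along[OF L])
    show "inj_on (\<lambda>j. take (b * L + j) v) {..<L}"
    proof (rule inj_onI)
      fix x y assume "x \<in> {..<L}" "y \<in> {..<L}" "take (b * L + x) v = take (b * L + y) v"
      then have "length (take (b * L + x) v) = length (take (b * L + y) v)" by simp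
      then show "x = y" using bl \<open>x \<in> {..<L}\<close> \<open>y \<in> {..<L}\<close> by (simp add: min_def split: if_splits)
    qed
    show "(\<lambda>j. take (b * L + j) v) ` {..<L} \<subseteq> T" using block_subset[OF v] by (simp add: block_def)
  qed
  then show ?thesis by (simp add: block_event_def block_covered_def)
qed

lemma prob_INT_block_events:
  assumes L: "0 < L" and Bs: "finite Bs" "Bs \<noteq> {}"
    and BT: "\<And>v b. (v, b) \<in> Bs \<Longrightarrow> v \<in> T \<and> (b + 1) * L \<le> length v"
    and dis: "disjoint_family_on (\<lambda>(v, b). block L v b) Bs"
  shows "prob (\<Inter>(v, b)\<in>Bs. block_event L v b) = block_prob L ^ card Bs"
proof -
  have "prob (\<Inter>\<beta>\<in>Bs. {\<omega>\<in>space M. (\<lambda>(v, b) f. block_covered L v b f) \<beta> (\<lambda>i. R i \<omega>)})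
      = (\<Prod>\<beta>\<in>Bs. prob {\<omega>\<in>space M. (\<lambda>(v, b) f. block_covered L v b f) \<beta> (\<lambda>i. R i \<omega>)})"
  proof (rule indep_vars_prob_INT_local[OF indep Bs _ dis])
    fix \<beta> assume b: "\<beta> \<in> Bs"
    obtain v b where vb: "\<beta> = (v, b)" by (cases \<beta>)
    have "v \<in> T" using BT b vb by blast
    then have "block L v b \<subseteq> T" by (rule block_subset)
    moreover have "finite (block L v b)" by (simp add: block_def)
    ultimately show "finite ((\<lambda>(v, b). block L v b) \<beta>) \<and> (\<lambda>(v, b). block L v b) \<beta> \<subseteq> T"
      using vb by simp
  next
    fix \<beta> and f f' :: "nat list \<Rightarrow> nat"
    assume h: "\<beta> \<in> Bs" "\<And>i. i \<in> (\<lambda>(v, b). block L v b) \<beta> \<Longrightarrow> f i = f' i"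
    obtain v b where vb: "\<beta> = (v, b)" by (cases \<beta>)
    have "block_covered L v b f = block_covered L v b f'" by (rule block_covered_cong) (use h(2) vb in simp)
    then show "(\<lambda>(v, b) f. block_covered L v b f) \<beta> f = (\<lambda>(v, b) f. block_covered L v b f) \<beta> f'" using vb by simp
  qed
  moreover have "(\<Inter>\<beta>\<in>Bs. {\<omega>\<in>space M. (\<lambda>(v, b) f. block_covered L v b f) \<beta> (\<lambda>i. R i \<omega>)})
      = (\<Inter>(v, b)\<in>Bs. block_event L v b)"
    by (auto simp: block_event_def split: prod.splits)
  moreover have "prob {\<omega>\<in>space M. (\<lambda>(v, b) f. block_covered L v b f) \<beta> (\<lambda>i. R i \<omega>)} = block_prob L"
    if "\<beta> \<in> Bs" for \<beta>
    using prob_block_event[OF L] BT that by (auto simp: block_event_def split: prod.splits)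
  ultimately show ?thesis by simp
qed

definition blocks_event :: "nat \<Rightarrow> nat \<Rightarrow> nat list \<Rightarrow> 'a set" where
  "blocks_event L n v = {\<omega>\<in>space M. \<forall>b<n. block_covered L v b (\<lambda>u. R u \<omega>)}"

lemma blocks_event_eq_INT: "0 < n \<Longrightarrow> blocks_event L n v = (\<Inter>b\<in>{..<n}. block_event L v b)"
  unfolding blocks_event_def block_event_def by auto

lemma blocks_event_sets: "v \<in> T \<Longrightarrow> blocks_event L n v \<in> events"
proof (cases "n = 0")
  case True then show ?thesis by (simp add: blocks_event_def)
next
  case False
  assume v: "v \<in> T"
  have "(\<Inter>b\<in>{..<n}. block_event L v b) \<in> events" using block_event_sets[OF v] False by (intro sets.finite_INT) auto
  then show ?thesis using False by (simp add: blocks_event_eq_INT)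
qed

lemma prob_blocks_event:
  assumes L: "0 < L" and n: "0 < n" and v: "v \<in> T" "length v = n * L"
  shows "prob (blocks_event L n v) = block_prob L ^ n"
proof -
  define Bs where "Bs = (\<lambda>b. (v, b)) ` {..<n}"
  have cB: "card Bs = n" unfolding Bs_def by (subst card_image) (auto simp: inj_on_def)
  have "blocks_event L n v = (\<Inter>(v, b)\<in>Bs. block_event L v b)" using n by (auto simp: blocks_event_eq_INT Bs_def)
  also have "prob \<dots> = block_prob L ^ card Bs"
  proof (rule prob_INT_block_events[OF L])
    show "finite Bs" "Bs \<noteq> {}" using n by (auto simp: Bs_def)
    fix v' b assume "(v', b) \<in> Bs"
    then show "v' \<in> T \<and> (b + 1) * L \<le> length v'" using v
      by (auto simp: Bs_def block_end_le)
  next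
    show "disjoint_family_on (\<lambda>(v, b). block L v b) Bs"
      unfolding disjoint_family_on_def
    proof (intro ballI impI)
      fix \<beta> \<beta>' assume "\<beta> \<in> Bs" "\<beta>' \<in> Bs" "\<beta> \<noteq> \<beta>'"
      then obtain b b' where "\<beta> = (v, b)" "\<beta>' = (v, b')" "b < n" "b' < n" "b \<noteq> b'"
        by (auto simp: Bs_def)
      then show "(case \<beta> of (v, b) \<Rightarrow> block L v b) \<inter> (case \<beta>' of (v, b) \<Rightarrow> block L v b) = {}"
        using v by (simp add: disjoint_blocks block_end_le)
    qed
  qed
  finally show ?thesis using cB by simp
qed

text \<open>If v and w split inside block m, the n blocks of v and the blocks of w after block m are
  pairwise disjoint.\<close>
lemma prob_blocks_event_pair_le:
  assumes L: "0 < L" and v: "v \<in> T" "length v = n * L" and w: "w \<in> T" "length w = n * L"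
    and m: "m < n" and neq: "take ((m + 1) * L) v \<noteq> take ((m + 1) * L) w"
  shows "prob (blocks_event L n v \<inter> blocks_event L n w) \<le> block_prob L ^ (2 * n - 1 - m)"
proof -
  define B1 where "B1 = (\<lambda>b. (v, b)) ` {..<n}"
  define B2 where "B2 = (\<lambda>b. (w, b)) ` {m<..<n}"
  define Bs where "Bs = B1 \<union> B2"
  have vw: "v \<noteq> w" using neq by auto
  have c1: "card B1 = n" unfolding B1_def by (subst card_image) (auto simp: inj_on_def)
  have c2: "card B2 = n - Suc m" unfolding B2_def by (subst card_image) (auto simp: inj_on_def)
  have dj: "B1 \<inter> B2 = {}" using vw by (auto simp: B1_def B2_def)
  have cB: "card Bs = 2 * n - 1 - m" unfolding Bs_def
    using card_Un_disjoint[of B1 B2] dj c1 c2 m by (simp add: B1_def B2_def)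
  have BT: "v' \<in> T \<and> (b + 1) * L \<le> length v'" if "(v', b) \<in> Bs" for v' b
    using that v w by (auto simp: Bs_def B1_def B2_def block_end_le)
  have sub: "blocks_event L n v \<inter> blocks_event L n w \<subseteq> (\<Inter>(v, b)\<in>Bs. block_event L v b)"
    by (auto simp: blocks_event_def block_event_def Bs_def B1_def B2_def)
  have ev: "(\<Inter>(v, b)\<in>Bs. block_event L v b) \<in> events"
    using block_event_sets[OF v(1)] block_event_sets[OF w(1)] m by (intro sets.finite_INT) (auto simp: Bs_def B1_def B2_def)
  have "prob (\<Inter>(v, b)\<in>Bs. block_event L v b) = block_prob L ^ card Bs"
  proof (rule prob_INT_block_events[OF L])
    show "finite Bs" "Bs \<noteq> {}" using m by (auto simp: Bs_def B1_def B2_def)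
    show "\<And>v b. (v, b) \<in> Bs \<Longrightarrow> v \<in> T \<and> (b + 1) * L \<le> length v" by (rule BT)
    show "disjoint_family_on (\<lambda>(v, b). block L v b) Bs"
      unfolding disjoint_family_on_def
    proof (intro ballI impI)
      fix \<beta> \<beta>' assume \<beta>: "\<beta> \<in> Bs" "\<beta>' \<in> Bs" "\<beta> \<noteq> \<beta>'"
      obtain u b u' b' where eq: "\<beta> = (u, b)" "\<beta>' = (u', b')"
        by (cases \<beta>, cases \<beta>')
      have len: "(b + 1) * L \<le> length u" "(b' + 1) * L \<le> length u'"
        using BT \<beta> eq by auto
      consider "u = u'" "b \<noteq> b'" | "u = v" "u' = w" "m < b'" | "u = w" "u' = v" "m < b"
        using \<beta> eq vw by (auto simp: Bs_def B1_def B2_def)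
      then show "(case \<beta> of (v, b) \<Rightarrow> block L v b) \<inter> (case \<beta>' of (v, b) \<Rightarrow> block L v b) = {}"
      proof cases
        case 1
        then show ?thesis
          using len eq disjoint_blocks by simp
      next
        case 2
        then show ?thesis
          using len eq disjoint_blocks_diverging[OF _ _ _ neq] by simp
      next
        case 3
        then show ?thesis
          using len eq disjoint_blocks_diverging[OF _ _ _ neq, of b' b] by (simp add: Int_commute)
      qed
    qed
  qed
  then have "prob (\<Inter>(v, b)\<in>Bs. block_event L v b) = block_prob L ^ (2 * n - 1 - m)" using cB by simp
  moreover have "prob (blocks_event L n v \<inter> blocks_event L n w) \<le> prob (\<Inter>(v, b)\<in>Bs. block_event L v b)"
    by (rule finite_measure_mono[OF sub ev])
  ultimately show ?thesis by simp
qed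

lemma prob_blocks_event_pair_le_last_agreement:
  assumes L: "0 < L" and n: "0 < n" and v: "v \<in> level T (n * L)" and w: "w \<in> level T (n * L)"
  obtains m where "m \<le> n" "take (m * L) v = take (m * L) w"
    "prob (blocks_event L n v \<inter> blocks_event L n w) \<le> block_prob L ^ (2 * n - 1 - m)"
proof -
  define Ms where "Ms = {m. m \<le> n \<and> take (m * L) v = take (m * L) w}"
  define m where "m = Max Ms"
  have "finite Ms" "0 \<in> Ms"
    unfolding Ms_def by simp_all
  then have m: "m \<in> Ms" and m_max: "\<And>m'. m' \<in> Ms \<Longrightarrow> m' \<le> m"
    unfolding m_def by (auto intro: Max_in)
  have vT: "v \<in> T" "length v = n * L" and wT: "w \<in> T" "length w = n * L"
    using v w by (auto simp: level_def)
  have "prob (blocks_event L n v \<inter> blocks_event L n w) \<le> block_prob L ^ (2 * n - 1 - m)"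
  proof (cases "m = n")
    case True
    then have "v = w"
      using m vT wT by (simp add: Ms_def)
    then have "prob (blocks_event L n v \<inter> blocks_event L n w) = block_prob L ^ n"
      using prob_blocks_event[OF L n vT] by simp
    also have "\<dots> \<le> block_prob L ^ (2 * n - 1 - m)"
      using True n block_prob_le_1 by (intro power_decreasing) (auto simp: block_prob_def)
    finally show ?thesis .
  next
    case False
    then have "m < n"
      using m by (simp add: Ms_def)
    moreover have "Suc m \<notin> Ms"
      using m_max by fastforce
    ultimately show ?thesis
      by (intro prob_blocks_event_pair_le[OF L vT wT]) (auto simp: Ms_def)
  qed
  with m show thesis
    by (intro that) (auto simp: Ms_def)
qed

lemma prob_blocks_event_pair_le_sum:
  assumes L: "0 < L" and n: "0 < n" and v: "v \<in> level T (n * L)" and w: "w \<in> level T (n * L)"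
  shows "prob (blocks_event L n v \<inter> blocks_event L n w)
     \<le> (\<Sum>m\<le>n. if take (m * L) v = take (m * L) w then block_prob L ^ (2 * n - 1 - m) else 0)"
proof -
  obtain m where m: "m \<le> n" "take (m * L) v = take (m * L) w"
    and le: "prob (blocks_event L n v \<inter> blocks_event L n w) \<le> block_prob L ^ (2 * n - 1 - m)"
    using prob_blocks_event_pair_le_last_agreement[OF assms] .
  have "0 \<le> block_prob L"
    by (simp add: block_prob_def)
  then have "block_prob L ^ (2 * n - 1 - m)
      \<le> (\<Sum>m\<le>n. if take (m * L) v = take (m * L) w then block_prob L ^ (2 * n - 1 - m) else 0)"
    using m member_le_sum[of m "{..n}" "\<lambda>m. if take (m * L) v = take (m * L) w
      then block_prob L ^ (2 * n - 1 - m) else 0"] by simp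
  with le show ?thesis
    by linarith
qed

lemma sum_prob_blocks_event_pairs_le:
  assumes L: "0 < L" and n: "0 < n"
  defines "V \<equiv> level T (n * L)"
  shows "(\<Sum>v\<in>V. \<Sum>w\<in>V. prob (blocks_event L n v \<inter> blocks_event L n w))
    \<le> (\<Sum>m\<le>n. block_prob L ^ (2 * n - 1 - m) * card (level_pairs T (n * L) (m * L)))"
proof -
  have finV: "finite V"
    unfolding V_def by (rule finite_level[OF tree])
  have "(\<Sum>v\<in>V. \<Sum>w\<in>V. prob (blocks_event L n v \<inter> blocks_event L n w))
      \<le> (\<Sum>v\<in>V. \<Sum>w\<in>V. \<Sum>m\<le>n. if take (m * L) v = take (m * L) w then block_prob L ^ (2 * n - 1 - m) else 0)"
    using prob_blocks_event_pair_le_sum[OF L n] unfolding V_def by (intro sum_mono) auto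
  also have "\<dots> = (\<Sum>m\<le>n. \<Sum>(v, w)\<in>V \<times> V. if take (m * L) v = take (m * L) w then block_prob L ^ (2 * n - 1 - m) else 0)"
    by (simp add: sum.swap[of _ "{..n}"] sum.cartesian_product[symmetric])
  also have "\<dots> = (\<Sum>m\<le>n. block_prob L ^ (2 * n - 1 - m) * card (level_pairs T (n * L) (m * L)))"
  proof (rule sum.cong[OF refl])
    fix m
    have "level_pairs T (n * L) (m * L) = {x\<in>V \<times> V. take (m * L) (fst x) = take (m * L) (snd x)}"
      by (auto simp: level_pairs_def V_def)
    then show "(\<Sum>(v, w)\<in>V \<times> V. if take (m * L) v = take (m * L) w then block_prob L ^ (2 * n - 1 - m) else 0)
        = block_prob L ^ (2 * n - 1 - m) * card (level_pairs T (n * L) (m * L))"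
      using finV by (simp add: case_prod_beta sum.inter_filter[symmetric])
  qed
  finally show ?thesis .
qed

definition blocks_level_event :: "nat \<Rightarrow> nat \<Rightarrow> 'a set" where
  "blocks_level_event L n = (\<Union>v\<in>level T (n * L). blocks_event L n v)"

lemma prob_blocks_level_event_ge:
  assumes L: "0 < L" and n: "0 < n" and sym: "spherically_symmetric T"
    and growth: "\<And>m. m \<le> n \<Longrightarrow> 2 ^ m \<le> real (card (level T (m * L))) * block_prob L ^ m"
    and \<rho>: "0 < block_prob L"
  shows "block_prob L / 2 \<le> prob (blocks_level_event L n)"
proof -
  define V where "V = level T (n * L)"
  define N where "N = real (card V)"
  define P where "P = prob (\<Union>v\<in>V. blocks_event L n v)"
  define S where "S = (\<Sum>v\<in>V. \<Sum>w\<in>V. prob (blocks_event L n v \<inter> blocks_event L n w))"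
  have VT: "v \<in> T" "length v = n * L" if "v \<in> V" for v
    using that by (auto simp: V_def level_def)
  have "(N * block_prob L ^ n)\<^sup>2 = (\<Sum>v\<in>V. prob (blocks_event L n v))\<^sup>2"
    using prob_blocks_event[OF L n] VT by (simp add: N_def)
  also have "\<dots> \<le> P * S"
    unfolding P_def S_def using finite_level[OF tree] blocks_event_sets VT
    by (intro prob_UN_second_moment) (auto simp: V_def)
  finally have PZ: "(N * block_prob L ^ n)\<^sup>2 \<le> P * S" .
  have "S \<le> (\<Sum>m\<le>n. (N * block_prob L ^ n)\<^sup>2 / block_prob L * (1 / 2) ^ m)"
    unfolding S_def V_def
  proof (rule order.trans[OF sum_prob_blocks_event_pairs_le[OF L n] sum_mono])
    fix m assume "m \<in> {..n}"
    then have m: "m \<le> n"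
      by simp
    have "real (card (level T (m * L))) * real (card (level_pairs T (n * L) (m * L))) = N\<^sup>2"
      using card_level_pairs[OF tree sym, of "m * L" "n * L"] m unfolding N_def V_def
      by (simp flip: of_nat_mult of_nat_power)
    then show "block_prob L ^ (2 * n - 1 - m) * card (level_pairs T (n * L) (m * L))
        \<le> (N * block_prob L ^ n)\<^sup>2 / block_prob L * (1 / 2) ^ m"
      by (intro second_moment_term_le[OF \<rho> m n growth[OF m]]) auto
  qed
  also have "\<dots> = (N * block_prob L ^ n)\<^sup>2 / block_prob L * (\<Sum>m\<le>n. (1 / 2) ^ m)"
    by (simp add: sum_distrib_left)
  also have "\<dots> \<le> (N * block_prob L ^ n)\<^sup>2 / block_prob L * 2"
    using sum_half_powers_le[of n] \<rho> by (intro mult_left_mono) auto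
  finally have "P * S \<le> P * ((N * block_prob L ^ n)\<^sup>2 / block_prob L * 2)"
    by (rule mult_left_mono) (simp add: P_def measure_nonneg)
  with PZ have "(N * block_prob L ^ n)\<^sup>2 \<le> P * ((N * block_prob L ^ n)\<^sup>2 / block_prob L * 2)"
    by linarith
  moreover have "0 < N * block_prob L ^ n"
    unfolding N_def V_def by (rule order.strict_trans2[OF _ growth[of n]]) simp_all
  then have X: "0 < (N * block_prob L ^ n)\<^sup>2"
    by (rule zero_less_power)
  ultimately have "(N * block_prob L ^ n)\<^sup>2 * 1 \<le> (N * block_prob L ^ n)\<^sup>2 * (2 * P / block_prob L)"
    by (simp add: field_simps)
  then have "1 \<le> 2 * P / block_prob L"
    using X by (rule mult_left_le_imp_le)
  then show ?thesis
    using \<rho> by (simp add: P_def V_def blocks_level_event_def field_simps)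
qed

lemma path_covered_sets:
  assumes v: "v \<in> T" shows "{\<omega>\<in>space M. path_covered (\<lambda>u. R u \<omega>) v} \<in> events"
proof (rule local_event_sets[OF indep, of "(\<lambda>j. take j v) ` {..length v}"])
  show "finite ((\<lambda>j. take j v) ` {..length v})" by simp
  show "(\<lambda>j. take j v) ` {..length v} \<subseteq> T" using rooted_tree_take[OF tree v] by auto
  fix f f' :: "nat list \<Rightarrow> nat" assume h: "\<And>i. i \<in> (\<lambda>j. take j v) ` {..length v} \<Longrightarrow> f i = f' i"
  have "f (take j v) = f' (take j v)" if "j \<le> length v" for j using h that by auto
  then show "path_covered f v = path_covered f' v"
    unfolding path_covered_def by (intro covered_cong) simp
qed

lemma survival_sets: "{\<omega>\<in>space M. infinite (cone_cluster T (\<lambda>v. R v \<omega>))} \<in> events"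
proof -
  have "{\<omega>\<in>space M. infinite (cone_cluster T (\<lambda>v. R v \<omega>))}
      = (\<Inter>d\<in>UNIV. \<Union>v\<in>level T d. {\<omega>\<in>space M. path_covered (\<lambda>u. R u \<omega>) v})"
    unfolding infinite_cone_cluster_iff[OF tree] by (auto simp: level_def)
  also have "\<dots> \<in> events"
    using path_covered_sets finite_level[OF tree] by (intro countable_Un_Int(2) sets.finite_UN) (auto simp: level_def)
  finally show ?thesis .
qed

lemma blocks_event_take:
  assumes "m \<le> n"
  shows "blocks_event L n v \<subseteq> blocks_event L m (take (m * L) v)"
proof
  fix \<omega> assume \<omega>: "\<omega> \<in> blocks_event L n v"
  have "block_covered L (take (m * L) v) b (\<lambda>u. R u \<omega>) = block_covered L v b (\<lambda>u. R u \<omega>)"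
    if "b < m" for b
    unfolding block_covered_def
  proof (rule covered_cong)
    fix j assume "j < L"
    then have "b * L + j \<le> m * L"
      using that block_end_le[of b m L] by linarith
    then show "R (take (b * L + j) (take (m * L) v)) \<omega> = R (take (b * L + j) v) \<omega>"
      by (simp add: min_def)
  qed
  then show "\<omega> \<in> blocks_event L m (take (m * L) v)"
    using \<omega> assms by (auto simp: blocks_event_def)
qed

lemma blocks_level_event_sets: "blocks_level_event L n \<in> events"
  unfolding blocks_level_event_def using finite_level[OF tree] blocks_event_sets
  by (intro sets.finite_UN) (auto simp: level_def)

lemma decseq_blocks_level_event: "decseq (blocks_level_event L)"
proof (rule decseq_SucI, rule subsetI)
  fix n \<omega> assume "\<omega> \<in> blocks_level_event L (Suc n)"
  then obtain v where v: "v \<in> level T (Suc n * L)" "\<omega> \<in> blocks_event L (Suc n) v"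
    unfolding blocks_level_event_def by blast
  then have "take (n * L) v \<in> level T (n * L)"
    using rooted_tree_take[OF tree] by (auto simp: level_def)
  moreover have "\<omega> \<in> blocks_event L n (take (n * L) v)"
    using v(2) blocks_event_take[of n "Suc n" L v] by auto
  ultimately show "\<omega> \<in> blocks_level_event L n"
    unfolding blocks_level_event_def by blast
qed

lemma INT_blocks_level_event_subset:
  assumes L: "0 < L"
  shows "(\<Inter>n. blocks_level_event L n) \<subseteq> {\<omega>\<in>space M. infinite (cone_cluster T (\<lambda>v. R v \<omega>))}"
proof
  fix \<omega> assume \<omega>: "\<omega> \<in> (\<Inter>n. blocks_level_event L n)"
  then have "\<omega> \<in> space M"
    by (auto simp: blocks_level_event_def blocks_event_def)
  moreover have "infinite (cone_cluster T (\<lambda>v. R v \<omega>))"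
    unfolding infinite_cone_cluster_iff[OF tree]
  proof
    fix d
    obtain v where v: "v \<in> level T (d * L)" "\<omega> \<in> blocks_event L d v"
      using \<omega> unfolding blocks_level_event_def by blast
    then have "path_covered (\<lambda>v. R v \<omega>) v"
      using L by (intro path_covered_blocks[of L v d]) (auto simp: level_def blocks_event_def)
    moreover have "d \<le> length v"
      using v(1) L by (simp add: level_def)
    ultimately show "\<exists>v\<in>level T d. path_covered (\<lambda>v. R v \<omega>) v"
      using v(1) rooted_tree_take[OF tree] path_covered_take
      by (intro bexI[of _ "take d v"]) (auto simp: level_def)
  qed
  ultimately show "\<omega> \<in> {\<omega>\<in>space M. infinite (cone_cluster T (\<lambda>v. R v \<omega>))}"
    by simp
qed

lemma prob_survival_ge:
  assumes L: "0 < L" and sym: "spherically_symmetric T"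
    and growth: "\<And>m. 2 ^ m \<le> real (card (level T (m * L))) * block_prob L ^ m"
    and \<rho>: "0 < block_prob L"
  shows "block_prob L / 2 \<le> prob {\<omega>\<in>space M. infinite (cone_cluster T (\<lambda>v. R v \<omega>))}"
proof -
  have "(\<lambda>n. prob (blocks_level_event L n)) \<longlonglongrightarrow> prob (\<Inter>n. blocks_level_event L n)"
    using decseq_blocks_level_event blocks_level_event_sets by (intro finite_Lim_measure_decseq) auto
  moreover have "block_prob L / 2 \<le> prob (blocks_level_event L n)" if "1 \<le> n" for n
    using that by (intro prob_blocks_level_event_ge[OF L _ sym growth \<rho>]) auto
  ultimately have "block_prob L / 2 \<le> prob (\<Inter>n. blocks_level_event L n)"
    by (intro LIMSEQ_le_const) auto
  also have "\<dots> \<le> prob {\<omega>\<in>space M. infinite (cone_cluster T (\<lambda>v. R v \<omega>))}"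
    using INT_blocks_level_event_subset[OF L] survival_sets by (rule finite_measure_mono)
  finally show ?thesis .
qed

end

section \<open>Choice of the block length\<close>

lemma level_growth_from_dim:
  assumes tree: "rooted_tree T" and dim: "dim_inf_seq T \<longlonglongrightarrow> D" and a: "ereal a < D"
  shows "\<forall>\<^sub>F n in sequentially. exp a ^ n < real (card (level T n))"
proof -
  have "\<forall>\<^sub>F n in sequentially. ereal a < dim_inf_seq T n \<and> 0 < n"
    using order_tendstoD(1)[OF dim a] eventually_gt_at_top[of 0] by eventually_elim simp
  then show ?thesis
  proof eventually_elim
    case (elim n)
    have "[] \<in> T"
      using tree by (simp add: rooted_tree_def)
    then have "dim_inf_seq T n \<le> lnE (card (level T n)) / ereal (real n)"
      unfolding dim_inf_seq_def Mdesc_Nil[symmetric] by (rule INF_lower)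
    with elim have lt: "ereal a < lnE (card (level T n)) / ereal (real n)"
      by (blast intro: less_le_trans)
    have "card (level T n) \<noteq> 0"
    proof
      assume "card (level T n) = 0"
      then show False
        using lt elim by (simp add: lnE_def)
    qed
    moreover from this have "real n * a < ln (real (card (level T n)))"
      using lt elim by (simp add: lnE_def field_simps)
    ultimately have "exp (real n * a) < real (card (level T n))"
      by (metis exp_less_mono exp_ln of_nat_0_less_iff bot_nat_0.not_eq_extremum)
    then show ?case
      by (simp add: exp_of_nat_mult)
  qed
qed

lemma prod_cdf_less_1:
  assumes p0: "pmf p 0 < 1" and bounded: "measure_pmf.prob p {..k} = 1"
  shows "(\<Prod>j<k. cdf p j) < 1"
proof (cases k)
  case 0
  then show ?thesis
    using p0 bounded by (simp add: measure_pmf_single[symmetric])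
next
  case (Suc k')
  have "(\<Prod>j<k. cdf p j) = cdf p 0 * (\<Prod>j<k'. cdf p (Suc j))"
    unfolding Suc prod.lessThan_Suc_shift ..
  also have "\<dots> \<le> cdf p 0"
    by (simp add: mult_left_le prod_le_1 cdf_nonneg cdf_le_1)
  finally show ?thesis
    using p0 by (simp add: cdf_0)
qed

lemma block_growth:
  fixes a c \<theta> \<rho> :: real and N :: "nat \<Rightarrow> nat"
  assumes L: "0 < L" "n0 \<le> L" and N: "\<And>n. n0 \<le> n \<Longrightarrow> a ^ n < N n" "1 \<le> N 0"
    and c: "0 \<le> c" "2 \<le> c * (\<theta> * a) ^ L" and \<theta>: "0 \<le> \<theta>" and \<rho>: "c * \<theta> ^ L \<le> \<rho>"
  shows "2 ^ m \<le> N (m * L) * \<rho> ^ m"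
proof (cases "m = 0")
  case True
  then show ?thesis
    using N(2) by simp
next
  case False
  then have "n0 \<le> m * L"
    using L by (metis le_trans mult_le_mono1 mult_1 not_gr0 Suc_leI One_nat_def)
  then have Nm: "(a ^ L) ^ m < N (m * L)"
    using N(1) by (simp add: power_mult[symmetric] mult.commute)
  have "(2::real) ^ m \<le> (c * (\<theta> * a) ^ L) ^ m"
    using c by (intro power_mono) auto
  also have "\<dots> = (a ^ L) ^ m * (c * \<theta> ^ L) ^ m"
    by (simp only: power_mult_distrib mult_ac)
  also have "\<dots> \<le> N (m * L) * \<rho> ^ m"
    using Nm \<rho> c \<theta> by (intro mult_mono power_mono) auto
  finally show ?thesis .
qed

context cone_percolation
begin

lemma block_prob_ge:
  assumes L: "0 < L" and v: "v \<in> level T L" and bounded: "measure_pmf.prob p {..k} = 1"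
  shows "(1 - pmf p 0) ^ k * (1 - (\<Prod>j<k. cdf p j)) ^ L \<le> block_prob L"
proof -
  have vT: "v \<in> T" "length v = L"
    using v by (auto simp: level_def)
  have "inj_on (\<lambda>j. take j v) {..<L}"
    by (rule inj_onI) (metis length_take lessThan_iff min.absorb4 vT(2))
  then interpret iid_radii M "\<lambda>j. R (take j v)" L p
    using indep_vars_reindex[OF indep] rooted_tree_take[OF tree vT(1)] distr_R
    by unfold_locales auto
  have "(1 - pmf p 0) ^ k * (1 - (\<Prod>j<k. cdf p j)) ^ L \<le> prob (covered_event L)"
    using prod_cdf_ge[OF bounded] prob_covered_event_ge[of L] by (rule order.trans) simp
  also have "prob (covered_event L) = block_prob L"
    using prob_block_event[OF L vT(1), of 0] vT
    by (simp add: covered_event_def block_event_def block_covered_def)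
  finally show ?thesis .
qed

lemma exists_good_block_length:
  assumes growth: "\<forall>\<^sub>F n in sequentially. a ^ n < real (card (level T n))"
    and a: "0 < a" "1 < (1 - (\<Prod>j<k. cdf p j)) * a"
    and p0: "pmf p 0 < 1" and bounded: "measure_pmf.prob p {..k} = 1"
  obtains L where "0 < L" "0 < block_prob L"
    "\<And>m. 2 ^ m \<le> real (card (level T (m * L))) * block_prob L ^ m"
proof -
  define q where "q = (\<Prod>j<k. cdf p j)"
  define c where "c = (1 - pmf p 0) ^ k"
  have c: "0 < c"
    unfolding c_def using p0 by simp
  have q: "q < 1"
    using a unfolding q_def by (auto simp: zero_less_mult_iff dest: order.strict_trans[OF zero_less_one])
  obtain n0 where n0: "\<And>n. n0 \<le> n \<Longrightarrow> a ^ n < real (card (level T n))"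
    using growth unfolding eventually_sequentially by blast
  obtain L0 where L0: "2 / c < ((1 - q) * a) ^ L0"
    using real_arch_pow a(2) unfolding q_def by blast
  define L where "L = max L0 (max n0 1)"
  have L: "0 < L" "n0 \<le> L"
    by (auto simp: L_def)
  have "((1 - q) * a) ^ L0 \<le> ((1 - q) * a) ^ L"
    using a(2) by (intro power_increasing) (auto simp: L_def q_def)
  then have "2 / c < ((1 - q) * a) ^ L"
    using L0 by linarith
  then have cL: "2 \<le> c * ((1 - q) * a) ^ L"
    using c by (simp add: field_simps)
  have "0 < real (card (level T L))"
    using n0[OF L(2)] zero_less_power[OF a(1), of L] by linarith
  then obtain v where "v \<in> level T L"
    by (auto simp: card_gt_0_iff)
  then have \<rho>: "c * (1 - q) ^ L \<le> block_prob L"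
    using block_prob_ge[OF L(1) _ bounded] by (simp add: c_def q_def)
  show thesis
  proof
    show "0 < L"
      by (fact L)
    have "0 < c * (1 - q) ^ L"
      using c q by simp
    then show "0 < block_prob L"
      using \<rho> by linarith
    show "2 ^ m \<le> real (card (level T (m * L))) * block_prob L ^ m" for m
    proof (rule block_growth[where N="\<lambda>n. card (level T n)", OF L _ _ _ cL _ \<rho>])
      show "a ^ n < real (card (level T n))" if "n0 \<le> n" for n
        using n0[OF that] .
    qed (use q c level_0[OF tree] in auto)
  qed
qed

end

theorem corollary3:
  fixes T :: "nat list set" and p :: "nat pmf" and k :: nat
    and M :: "'a measure" and R :: "nat list \<Rightarrow> 'a \<Rightarrow> nat" and D :: ereal
  assumes tree: "rooted_tree T"
    and sym: "spherically_symmetric T"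
    and prob: "prob_space M"
    and indep: "prob_space.indep_vars M (\<lambda>_. count_space UNIV) R T"
    and distr: "\<forall>v\<in>T. distr M (count_space UNIV) (R v) = measure_pmf p"
    and p0: "0 < pmf p 0" "pmf p 0 < 1"
    and bounded: "measure_pmf.prob p {..k} = 1"
    and dim: "dim_inf_seq T \<longlonglongrightarrow> D"
    and cond: "D > ereal (ln (1 / (1 - (\<Prod>j=1..k. measure_pmf.prob p {..<j}))))"
  shows "measure M {\<omega> \<in> space M. infinite (cone_cluster T (\<lambda>v. R v \<omega>))} > 0"
proof -
  interpret cone_percolation M T p R
    using prob tree indep distr by (simp add: cone_percolation_def cone_percolation_axioms_def)
  define q where "q = (\<Prod>j<k. cdf p j)"
  have "(\<Prod>j=1..k. measure_pmf.prob p {..<j}) = q"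
    unfolding q_def cdf_def by (simp add: prod.atLeast1_atMost_eq lessThan_Suc_atMost)
  moreover have "q < 1"
    unfolding q_def using prod_cdf_less_1[OF p0(2) bounded] .
  ultimately have "ereal (ln (1 / (1 - q))) < D"
    using cond by simp
  then obtain a where a: "ln (1 / (1 - q)) < a" "ereal a < D"
    using ereal_dense2 by (metis less_ereal.simps(1))
  have "1 / (1 - q) < exp a"
    using exp_less_mono[OF a(1)] \<open>q < 1\<close> by simp
  then have "1 < (1 - q) * exp a"
    using \<open>q < 1\<close> by (simp add: field_simps)
  then obtain L where L: "0 < L" "0 < block_prob L"
    "\<And>m. 2 ^ m \<le> real (card (level T (m * L))) * block_prob L ^ m"
    using exists_good_block_length[OF level_growth_from_dim[OF tree dim a(2)] _ _ p0(2) bounded]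
    unfolding q_def by auto
  then show ?thesis
    using prob_survival_ge[OF L(1) sym L(3) L(2)] by linarith
qed

end
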